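(* Let $B$ be a Boolean algebra and let $U,V,W$ be CFG-spaces over $B$ with $U\cup V\subset W$ (the metrics on $U$ and $V$ being the restrictions of that of $W$), and let $F:U\to V$ be an isometry. Then there is an isometry $F':W\to W$ whose restriction to $U$ is $F$.
   Context: A Boolean metric space over a Boolean algebra $B$ is a set $X$ with a symmetric map $d:X\times X\to B$ such that $d(x,y)=0$ iff $x=y$, and $d(x,z)\le d(x,y)\vee d(y,z)$ for all $x,y,z$. A map $f:X\to Y$ between such spaces is contractive if $d(f(x),f(y))\le d(x,y)$ for all $x,y$; an isometry is a bijection with $d(f(x),f(y))=d(x,y)$ for all $x,y$. A partition of $B$ is a finite family $a_0,\dots,a_n$ of pairwise disjoint elements ($a_i\wedge a_j=0$ for $i\ne j$) with $a_0\vee\dots\vee a_n=1$. Given $x_0,\dots,x_n\in X$ and a partition $a_0,\dots,a_n$, an element $x\in X$ is a convex combination of the $x_i$ with coefficients $a_i$ if $a_i\wedge d(x,x_i)=0$ for all $i$. $X$ is convex if for every $x_0,\dots,x_n\in X$ and every partition $a_0,\dots,a_n$ of $B$ there exists such a convex combination in $X$; $X$ is finitely generated if there is a finite $S\subset X$ such that every element of $X$ is a convex combination of elements of $S$. A CFG-space is a convex, finitely generated Boolean metric space. *)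

theory Defs
  imports Main
begin

definition bool_metric :: "'a set \<Rightarrow> ('a \<Rightarrow> 'a \<Rightarrow> 'b::boolean_algebra) \<Rightarrow> bool" where
  "bool_metric X d \<longleftrightarrow>
     (\<forall>x\<in>X. \<forall>y\<in>X. d x y = d y x) \<and>
     (\<forall>x\<in>X. \<forall>y\<in>X. d x y = bot \<longleftrightarrow> x = y) \<and>
     (\<forall>x\<in>X. \<forall>y\<in>X. \<forall>z\<in>X. d x z \<le> sup (d x y) (d y z))"

definition is_partition :: "nat \<Rightarrow> (nat \<Rightarrow> 'b::boolean_algebra) \<Rightarrow> bool" where
  "is_partition n a \<longleftrightarrow>
     (\<forall>i\<le>n. \<forall>j\<le>n. i \<noteq> j \<longrightarrow> inf (a i) (a j) = bot) \<and>
     Sup_fin (a ` {..n}) = top"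

definition convex_comb ::
  "('a \<Rightarrow> 'a \<Rightarrow> 'b::boolean_algebra) \<Rightarrow> 'a \<Rightarrow> nat \<Rightarrow> (nat \<Rightarrow> 'a) \<Rightarrow> (nat \<Rightarrow> 'b) \<Rightarrow> bool" where
  "convex_comb d x n xs a \<longleftrightarrow> (\<forall>i\<le>n. inf (a i) (d x (xs i)) = bot)"

definition bool_convex :: "'a set \<Rightarrow> ('a \<Rightarrow> 'a \<Rightarrow> 'b::boolean_algebra) \<Rightarrow> bool" where
  "bool_convex X d \<longleftrightarrow>
     (\<forall>n xs a. (\<forall>i\<le>n. xs i \<in> X) \<and> is_partition n a \<longrightarrow>
        (\<exists>x\<in>X. convex_comb d x n xs a))"

definition fin_generated :: "'a set \<Rightarrow> ('a \<Rightarrow> 'a \<Rightarrow> 'b::boolean_algebra) \<Rightarrow> bool" where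
  "fin_generated X d \<longleftrightarrow>
     (\<exists>S. finite S \<and> S \<subseteq> X \<and>
        (\<forall>x\<in>X. \<exists>n xs a. (\<forall>i\<le>n. xs i \<in> S) \<and> is_partition n a \<and> convex_comb d x n xs a))"

definition CFG_space :: "'a set \<Rightarrow> ('a \<Rightarrow> 'a \<Rightarrow> 'b::boolean_algebra) \<Rightarrow> bool" where
  "CFG_space X d \<longleftrightarrow> bool_metric X d \<and> bool_convex X d \<and> fin_generated X d"

definition bool_isometry ::
  "'a set \<Rightarrow> 'a set \<Rightarrow> ('a \<Rightarrow> 'a \<Rightarrow> 'b::boolean_algebra) \<Rightarrow> ('a \<Rightarrow> 'a) \<Rightarrow> bool" where
  "bool_isometry X Y d f \<longleftrightarrow> bij_betw f X Y \<and> (\<forall>x\<in>X. \<forall>y\<in>X. d (f x) (f y) = d x y)"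

end

theory Submission
  imports Defs
begin

text \<open>
  Fix a finite generating set \<open>G\<close> of the CFG-space \<open>W\<close> and a finite generating set \<open>SU\<close> of
  \<open>U\<close>. The isometry \<open>F\<close> is extended in two stages.

  First we construct maps \<open>f, g\<close> on the generators such that \<open>f\<close> preserves distances,
  \<open>g\<close> inverts it, and \<open>d (F u) (f s) = d u s\<close> for \<open>u \<in> SU\<close>, \<open>s \<in> G\<close>. Such data are built
  locally: on an element \<open>c\<close> of the algebra deciding all the finitely many relevant distances,
  agreement on \<open>c\<close> is an equivalence relation and the problem becomes the discrete one of
  permuting its classes (\<open>class_map_on_generators\<close>, \<open>local_ext_decided\<close>); local
  solutions glue along the algebra by convexity (\<open>local_ext_sup\<close>), and finitely many cuts
  reach \<open>top\<close> (\<open>local_ext_top\<close>).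

  Second, each \<open>w \<in> W\<close> is sent to the unique \<open>z\<close> with \<open>d z (f s) = d w s\<close> for all
  \<open>s \<in> G\<close>; existence comes from convex combinations of the points \<open>f s\<close>, uniqueness and
  isometry from the fact that the sets \<open>- d w s\<close> cover the algebra, surjectivity from \<open>g\<close>,
  and agreement with \<open>F\<close> on \<open>U\<close> from the compatibility with \<open>F\<close> on \<open>SU\<close> (locale
  \<open>generator_isometry\<close>).
\<close>

section \<open>Boolean algebra facts\<close>

lemma partition_bot:
  fixes a :: "nat \<Rightarrow> 'b::boolean_algebra"
  assumes "is_partition n a" and "\<And>i. i \<le> n \<Longrightarrow> inf x (a i) = bot"
  shows "x = bot"
proof -
  have "Sup_fin (a ` {..n}) \<le> - x"
  proof (rule Sup_fin.boundedI)
    show "finite (a ` {..n})" "a ` {..n} \<noteq> {}" by simp_all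
    fix y assume "y \<in> a ` {..n}"
    then obtain i where "i \<le> n" "y = a i" by auto
    then show "y \<le> - x" using assms(2)[of i] by (metis inf_shunt inf_commute)
  qed
  then have "top \<le> - x" using assms(1) unfolding is_partition_def by simp
  then show ?thesis by (metis compl_le_swap1 compl_top_eq bot_unique)
qed

lemma partition_ext:
  fixes a :: "nat \<Rightarrow> 'b::boolean_algebra"
  assumes part: "is_partition n a" and eq: "\<And>i. i \<le> n \<Longrightarrow> inf (a i) X = inf (a i) Y"
  shows "X = Y"
proof -
  have le: "P \<le> Q" if pq: "\<And>i. i \<le> n \<Longrightarrow> inf (a i) P = inf (a i) Q" for P Q
  proof -
    have "inf P (- Q) = bot"
    proof (rule partition_bot[OF part])
      fix i assume "i \<le> n"
      have "inf (inf P (- Q)) (a i) = inf (inf (a i) Q) (- Q)"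
        using pq[OF \<open>i \<le> n\<close>] by (metis inf.assoc inf.commute)
      then show "inf (inf P (- Q)) (a i) = bot" by (simp add: inf_assoc)
    qed
    then show ?thesis by (simp add: inf_shunt)
  qed
  show ?thesis by (rule antisym; rule le) (simp_all add: eq)
qed

lemma two_block_partition:
  "is_partition 1 (\<lambda>i. if i = 0 then c else - (c::'b::boolean_algebra))"
proof -
  have blocks: "{..(1::nat)} = {0, 1}" by auto
  then have "(\<lambda>i. if i = 0 then c else - c) ` {..(1::nat)} = {c, - c}" by auto
  then show ?thesis
    unfolding is_partition_def using blocks by (auto simp: sup_compl_top inf_compl_bot inf_commute)
qed

lemma split_by_compl: "sup (inf c X) (inf (- c) X) = (X::'b::boolean_algebra)"
  by (metis inf_sup_distrib2 inf_top_left sup_compl_top)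

lemma glue_agreement:
  fixes c :: "'b::boolean_algebra"
  assumes "inf c A = inf c B" and "inf c' A' = inf c' B'"
  shows "inf (sup c c') (sup (inf c A) (inf (- c) A')) = inf (sup c c') (sup (inf c B) (inf (- c) B'))"
proof -
  have "inf (sup c c') (sup (inf c X) (inf (- c) Y)) = sup (inf c X) (inf (- c) (inf c' Y))"
    for X Y :: 'b
  proof -
    have "inf (sup c c') (inf c X) = inf c X" by (rule inf.absorb2) (simp add: le_infI1)
    moreover have "inf (- c) (sup c c') = inf (- c) c'" by (simp add: inf_sup_distrib1)
    then have "inf (sup c c') (inf (- c) Y) = inf (- c) (inf c' Y)" by (metis inf.assoc inf.commute)
    ultimately show ?thesis by (simp add: inf_sup_distrib1)
  qed
  then show ?thesis using assms by simp
qed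

lemma decided_agreement:
  fixes c :: "'b::boolean_algebra"
  assumes "c \<le> X \<or> c \<le> - X" and "c \<le> Y \<or> c \<le> - Y"
    and "inf c X = bot \<longleftrightarrow> inf c Y = bot"
  shows "inf c X = inf c Y"
  using assms by (metis inf.absorb1 inf_shunt)

text \<open>Induction over the atoms generated by a finite set \<open>P\<close>: a property closed under
  binary joins holds for \<open>c\<close> once it holds for every \<open>c' \<le> c\<close> that decides each \<open>b \<in> P\<close>.\<close>
lemma decided_induct:
  fixes c :: "'b::boolean_algebra"
  assumes "finite P" and join: "\<And>x y. \<Phi> x \<Longrightarrow> \<Phi> y \<Longrightarrow> \<Phi> (sup x y)"
    and decided: "\<And>c'. c' \<le> c \<Longrightarrow> (\<forall>b\<in>P. c' \<le> b \<or> c' \<le> - b) \<Longrightarrow> \<Phi> c'"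
  shows "\<Phi> c"
  using assms(1,3)
proof (induction P arbitrary: c rule: finite_induct)
  case empty
  then show ?case by auto
next
  case (insert b P)
  have inside: "\<Phi> (inf c b)"
    by (rule insert.IH) (use insert.prems in \<open>auto intro: le_infI1\<close>)
  have outside: "\<Phi> (inf c (- b))"
    by (rule insert.IH) (use insert.prems in \<open>auto intro: le_infI1\<close>)
  have "sup (inf c b) (inf c (- b)) = c"
    by (metis inf_sup_distrib1 sup_compl_top inf_top_right)
  with join[OF inside outside] show ?case by metis
qed

section \<open>Extending a class map to a permutation\<close>

lemma extend_to_permutation:
  assumes "finite Q" "A \<subseteq> Q" "inj_on h A" "h ` A \<subseteq> Q"
  shows "\<exists>\<pi>. bij_betw \<pi> Q Q \<and> (\<forall>x\<in>A. \<pi> x = h x)"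
proof -
  have "finite A" using assms finite_subset by blast
  then have "card (Q - A) = card (Q - h ` A)"
    using assms by (simp add: card_Diff_subset card_image)
  then obtain k where k: "bij_betw k (Q - A) (Q - h ` A)"
    using finite_same_card_bij[of "Q - A" "Q - h ` A"] assms(1) by auto
  define \<pi> where "\<pi> x = (if x \<in> A then h x else k x)" for x
  have "bij_betw \<pi> A (h ` A)"
    using inj_on_imp_bij_betw[OF assms(3)]
    by (rule bij_betw_cong[THEN iffD1, rotated]) (simp add: \<pi>_def)
  moreover have "bij_betw \<pi> (Q - A) (Q - h ` A)"
    using k by (rule bij_betw_cong[THEN iffD1, rotated]) (auto simp: \<pi>_def)
  ultimately have "bij_betw \<pi> (A \<union> (Q - A)) (h ` A \<union> (Q - h ` A))"
    by (rule bij_betw_combine) auto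
  moreover have "A \<union> (Q - A) = Q" "h ` A \<union> (Q - h ` A) = Q" using assms by auto
  ultimately show ?thesis by (auto simp: \<pi>_def)
qed

lemma class_permutation:
  assumes eqv: "equiv T r" and fin: "finite (T // r)" and ST: "S \<subseteq> T" "F ` S \<subseteq> T"
    and resp: "\<And>u u'. u \<in> S \<Longrightarrow> u' \<in> S \<Longrightarrow> (F u, F u') \<in> r \<longleftrightarrow> (u, u') \<in> r"
  shows "\<exists>\<pi>. bij_betw \<pi> (T // r) (T // r) \<and> (\<forall>u\<in>S. \<pi> (r``{u}) = r``{F u})"
proof -
  define cls where "cls x = r``{x}" for x
  define h where "h C = cls (F (inv_into S cls C))" for C
  have cls_eq: "cls x = cls y \<longleftrightarrow> (x, y) \<in> r" if "x \<in> T" "y \<in> T" for x y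
    using eq_equiv_class_iff[OF eqv that] unfolding cls_def .
  have FS: "F u \<in> T" "u \<in> T" if "u \<in> S" for u using ST that by auto
  have h_cls: "h (cls u) = cls (F u)" if u: "u \<in> S" for u
  proof -
    let ?v = "inv_into S cls (cls u)"
    have v: "?v \<in> S" "cls ?v = cls u" using u by (simp_all add: inv_into_into f_inv_into_f)
    then have "(?v, u) \<in> r" using cls_eq FS v(1) u by metis
    then have "(F ?v, F u) \<in> r" using resp v(1) u by metis
    then show ?thesis unfolding h_def using cls_eq FS u v(1) by metis
  qed
  have "inj_on h (cls ` S)"
  proof (rule inj_onI)
    fix C C' assume "C \<in> cls ` S" "C' \<in> cls ` S" and hC: "h C = h C'"
    then obtain u u' where u: "u \<in> S" "u' \<in> S" "C = cls u" "C' = cls u'" by blast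
    then have "cls (F u) = cls (F u')" using hC h_cls by metis
    then show "C = C'" using u cls_eq FS resp by metis
  qed
  moreover have "cls ` S \<subseteq> T // r" "h ` cls ` S \<subseteq> T // r"
    using FS h_cls unfolding cls_def by (auto simp: quotientI)
  ultimately obtain \<pi> where "bij_betw \<pi> (T // r) (T // r)" "\<forall>C\<in>cls ` S. \<pi> C = h C"
    using extend_to_permutation[OF fin] by metis
  then show ?thesis using h_cls unfolding cls_def by auto
qed

text \<open>The discrete version of the extension theorem: a map on \<open>S\<close> that preserves and reflects
  an equivalence relation, all of whose classes meet the finite set \<open>G\<close>, is matched on \<open>G\<close> by a
  map \<open>f\<close> inducing a permutation of the classes, together with a map \<open>g\<close> inducing its inverse.\<close>
lemma class_map_on_generators:
  assumes eqv: "equiv T r" and fin: "finite G" and GT: "G \<subseteq> T"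
    and cover: "\<And>x. x \<in> T \<Longrightarrow> \<exists>s\<in>G. (x, s) \<in> r"
    and ST: "S \<subseteq> T" "F ` S \<subseteq> T"
    and resp: "\<And>u u'. u \<in> S \<Longrightarrow> u' \<in> S \<Longrightarrow> (F u, F u') \<in> r \<longleftrightarrow> (u, u') \<in> r"
  shows "\<exists>f g. (\<forall>s\<in>G. f s \<in> G \<and> g s \<in> G) \<and>
    (\<forall>s\<in>G. \<forall>s'\<in>G. ((f s, f s') \<in> r \<longleftrightarrow> (s, s') \<in> r) \<and> ((g s, s') \<in> r \<longleftrightarrow> (s, f s') \<in> r)) \<and>
    (\<forall>u\<in>S. \<forall>s\<in>G. (F u, f s) \<in> r \<longleftrightarrow> (u, s) \<in> r)"
proof -
  define cls where "cls x = r``{x}" for x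
  have cls_eq: "cls x = cls y \<longleftrightarrow> (x, y) \<in> r" if "x \<in> T" "y \<in> T" for x y
    using eq_equiv_class_iff[OF eqv that] unfolding cls_def .
  have in_classes: "cls x \<in> cls ` G" if x: "x \<in> T" for x
  proof -
    obtain s where "s \<in> G" "(x, s) \<in> r" using cover[OF x] by blast
    then show ?thesis using cls_eq[OF x] GT by blast
  qed
  have "T // r = cls ` G"
  proof
    show "T // r \<subseteq> cls ` G"
      using in_classes unfolding cls_def by (auto elim!: quotientE)
    show "cls ` G \<subseteq> T // r" using GT unfolding cls_def by (auto intro: quotientI)
  qed
  then obtain \<pi> where \<pi>: "bij_betw \<pi> (cls ` G) (cls ` G)" "\<And>u. u \<in> S \<Longrightarrow> \<pi> (cls u) = cls (F u)"
    using class_permutation[OF eqv _ ST resp] fin unfolding cls_def by auto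
  define f where "f s = inv_into G cls (\<pi> (cls s))" for s
  define g where "g s = inv_into G cls (inv_into (cls ` G) \<pi> (cls s))" for s
  have f: "f s \<in> G" "cls (f s) = \<pi> (cls s)" if "s \<in> G" for s
  proof -
    have "\<pi> (cls s) \<in> cls ` G" using that \<pi>(1) by (auto simp: bij_betw_def)
    then show "f s \<in> G" "cls (f s) = \<pi> (cls s)"
      unfolding f_def by (simp_all add: inv_into_into f_inv_into_f)
  qed
  have g: "g s \<in> G" "\<pi> (cls (g s)) = cls s" if "s \<in> G" for s
  proof -
    have "cls s \<in> \<pi> ` cls ` G" using that \<pi>(1) by (auto simp: bij_betw_def)
    then have "inv_into (cls ` G) \<pi> (cls s) \<in> cls ` G" "\<pi> (inv_into (cls ` G) \<pi> (cls s)) = cls s"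
      by (simp_all add: inv_into_into f_inv_into_f)
    then show "g s \<in> G" "\<pi> (cls (g s)) = cls s"
      unfolding g_def by (simp_all add: inv_into_into f_inv_into_f)
  qed
  have \<pi>_eq: "\<pi> (cls x) = \<pi> (cls y) \<longleftrightarrow> (x, y) \<in> r" if xy: "x \<in> T" "y \<in> T" for x y
  proof -
    have "inj_on \<pi> (cls ` G)" using \<pi>(1) by (simp add: bij_betw_def)
    then have "\<pi> (cls x) = \<pi> (cls y) \<longleftrightarrow> cls x = cls y"
      using in_classes[OF xy(1)] in_classes[OF xy(2)] by (rule inj_on_eq_iff)
    then show ?thesis using cls_eq[OF xy] by simp
  qed
  have fG: "f s \<in> T" "g s \<in> T" if "s \<in> G" for s using f g that GT by blast+
  show ?thesis
  proof (intro exI conjI ballI)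
    fix s s' assume s: "s \<in> G" and s': "s' \<in> G"
    show "(f s, f s') \<in> r \<longleftrightarrow> (s, s') \<in> r"
      using cls_eq[OF fG(1)[OF s] fG(1)[OF s']] f(2)[OF s] f(2)[OF s'] \<pi>_eq[of s s'] s s' GT
      by auto
    have "(g s, s') \<in> r \<longleftrightarrow> \<pi> (cls (g s)) = \<pi> (cls s')"
      using \<pi>_eq fG(2)[OF s] s' GT by blast
    also have "\<dots> \<longleftrightarrow> cls s = cls (f s')" using f(2)[OF s'] g(2)[OF s] by simp
    also have "\<dots> \<longleftrightarrow> (s, f s') \<in> r" using cls_eq fG(1)[OF s'] s GT by blast
    finally show "(g s, s') \<in> r \<longleftrightarrow> (s, f s') \<in> r" .
  next
    fix u s assume u: "u \<in> S" and s: "s \<in> G"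
    have uT: "u \<in> T" "F u \<in> T" using u ST by auto
    have "(F u, f s) \<in> r \<longleftrightarrow> cls (F u) = cls (f s)" using cls_eq uT(2) fG(1)[OF s] by blast
    also have "\<dots> \<longleftrightarrow> \<pi> (cls u) = \<pi> (cls s)" using f(2)[OF s] \<pi>(2)[OF u] by simp
    also have "\<dots> \<longleftrightarrow> (u, s) \<in> r" using \<pi>_eq uT(1) s GT by blast
    finally show "(F u, f s) \<in> r \<longleftrightarrow> (u, s) \<in> r" .
  qed (use f g in auto)
qed

section \<open>Boolean metric spaces\<close>

locale bool_metric_space =
  fixes W :: "'a set" and d :: "'a \<Rightarrow> 'a \<Rightarrow> 'b::boolean_algebra"
  assumes metric: "bool_metric W d"
begin

lemma dist_sym: "x \<in> W \<Longrightarrow> y \<in> W \<Longrightarrow> d x y = d y x"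
  using metric unfolding bool_metric_def by blast

lemma dist_eq_bot_iff: "x \<in> W \<Longrightarrow> y \<in> W \<Longrightarrow> d x y = bot \<longleftrightarrow> x = y"
  using metric unfolding bool_metric_def by blast

lemma dist_self [simp]: "x \<in> W \<Longrightarrow> d x x = bot"
  using dist_eq_bot_iff by blast

lemma dist_triangle: "x \<in> W \<Longrightarrow> y \<in> W \<Longrightarrow> z \<in> W \<Longrightarrow> d x z \<le> sup (d x y) (d y z)"
  using metric unfolding bool_metric_def by blast

definition agree :: "'b \<Rightarrow> 'a \<Rightarrow> 'a \<Rightarrow> bool" where
  "agree e x y \<longleftrightarrow> inf e (d x y) = bot"

lemma agree_iff_le: "agree e x y \<longleftrightarrow> e \<le> - d x y"
  unfolding agree_def by (rule inf_shunt)

lemma convex_comb_iff_agree: "convex_comb d x n xs a \<longleftrightarrow> (\<forall>i\<le>n. agree (a i) x (xs i))"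
  unfolding convex_comb_def agree_def ..

lemma agree_refl: "x \<in> W \<Longrightarrow> agree e x x"
  unfolding agree_def by simp

lemma agree_sym: "x \<in> W \<Longrightarrow> y \<in> W \<Longrightarrow> agree e x y \<Longrightarrow> agree e y x"
  unfolding agree_def by (simp add: dist_sym)

lemma agree_trans:
  assumes "x \<in> W" "y \<in> W" "z \<in> W" and "agree e x y" "agree e y z"
  shows "agree e x z"
proof -
  have "inf e (d x z) \<le> inf e (sup (d x y) (d y z))"
    using dist_triangle[OF assms(1-3)] by (rule inf_mono[OF order_refl])
  also have "\<dots> = bot" using assms(4,5) unfolding agree_def by (simp add: inf_sup_distrib1)
  finally show ?thesis unfolding agree_def by (simp add: bot_unique)
qed

lemma agree_mono: "e' \<le> e \<Longrightarrow> agree e x y \<Longrightarrow> agree e' x y"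
  unfolding agree_iff_le by (rule order_trans)

lemma agree_off_dist: "agree (- d x y) x y"
  unfolding agree_def by simp

lemma agree_dist:
  assumes "x \<in> W" "x' \<in> W" "y \<in> W" "y' \<in> W" and "agree e x x'" "agree e y y'"
  shows "inf e (d x y) = inf e (d x' y')"
proof -
  have le: "inf e (d p q) \<le> inf e (d p' q')"
    if W: "p \<in> W" "p' \<in> W" "q \<in> W" "q' \<in> W" and agr: "agree e p p'" "agree e q' q" for p p' q q'
  proof -
    have "d p q \<le> sup (d p p') (d p' q)" using dist_triangle W by blast
    also have "d p' q \<le> sup (d p' q') (d q' q)" using dist_triangle W by blast
    finally have "inf e (d p q) \<le> inf e (sup (d p p') (sup (d p' q') (d q' q)))"
      by (simp add: le_infI2 sup.coboundedI2)
    also have "\<dots> = inf e (d p' q')"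
      using agr unfolding agree_def by (simp add: inf_sup_distrib1)
    finally show ?thesis .
  qed
  show ?thesis
    using le[OF assms(1-4) assms(5) agree_sym[OF assms(3,4,6)]]
      le[OF assms(2,1,4,3) agree_sym[OF assms(1,2,5)] assms(6)]
    by (rule antisym)
qed

lemma dist_eq_by_blocks:
  assumes part: "is_partition n a" and W: "x \<in> W" "y \<in> W" "p \<in> W" "q \<in> W"
    and blocks: "\<And>i. i \<le> n \<Longrightarrow> xs i \<in> W \<and> ys i \<in> W \<and> agree (a i) x (xs i) \<and> agree (a i) y (ys i)
                          \<and> d (xs i) p = d (ys i) q"
  shows "d x p = d y q"
proof (rule partition_ext[OF part])
  fix i assume i: "i \<le> n"
  have b: "xs i \<in> W" "ys i \<in> W" "agree (a i) x (xs i)" "agree (a i) y (ys i)"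
    "d (xs i) p = d (ys i) q"
    using blocks[OF i] by blast+
  have "inf (a i) (d x p) = inf (a i) (d (xs i) p)"
    using agree_dist[OF W(1) b(1) W(3) W(3) b(3) agree_refl[OF W(3)]] .
  also have "\<dots> = inf (a i) (d (ys i) q)" using b(5) by simp
  also have "\<dots> = inf (a i) (d y q)"
    using agree_dist[OF W(2) b(2) W(4) W(4) b(4) agree_refl[OF W(4)]] by simp
  finally show "inf (a i) (d x p) = inf (a i) (d y q)" .
qed

definition glued :: "'b \<Rightarrow> 'a \<Rightarrow> 'a \<Rightarrow> 'a \<Rightarrow> bool" where
  "glued c x x1 x2 \<longleftrightarrow> x \<in> W \<and> x1 \<in> W \<and> x2 \<in> W \<and> agree c x x1 \<and> agree (- c) x x2"

lemma glued_self: "x \<in> W \<Longrightarrow> glued c x x x"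
  unfolding glued_def by (simp add: agree_refl)

lemma glued_dist:
  assumes "glued c x x1 x2" and "glued c y y1 y2"
  shows "d x y = sup (inf c (d x1 y1)) (inf (- c) (d x2 y2))"
proof -
  have "inf c (d x y) = inf c (d x1 y1)" "inf (- c) (d x y) = inf (- c) (d x2 y2)"
    using assms unfolding glued_def by (blast intro: agree_dist)+
  then show ?thesis using split_by_compl[of c "d x y"] by simp
qed

lemma glued_agreement:
  assumes "glued c x x1 x2" "glued c y y1 y2" "glued c p p1 p2" "glued c q q1 q2"
    and "inf c (d x1 y1) = inf c (d p1 q1)" and "inf c' (d x2 y2) = inf c' (d p2 q2)"
  shows "inf (sup c c') (d x y) = inf (sup c c') (d p q)"
  unfolding glued_dist[OF assms(1,2)] glued_dist[OF assms(3,4)]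
  using assms(5,6) by (rule glue_agreement)

end

section \<open>Finitely generated convex spaces\<close>

locale generated_space = bool_metric_space +
  fixes G :: "'a set"
  assumes convex: "bool_convex W d" and finite_gen: "finite G" and gen_subset: "G \<subseteq> W"
    and generates:
      "\<And>x. x \<in> W \<Longrightarrow> \<exists>n xs a. (\<forall>i\<le>n. xs i \<in> G) \<and> is_partition n a \<and> convex_comb d x n xs a"
begin

lemma combination_exists:
  assumes "is_partition n a" and "\<And>i. i \<le> n \<Longrightarrow> xs i \<in> W"
  obtains z where "z \<in> W" and "\<And>i. i \<le> n \<Longrightarrow> agree (a i) z (xs i)"
  using convex assms unfolding bool_convex_def convex_comb_iff_agree by blast

lemma generator_decomposition:
  assumes "w \<in> W"
  obtains n xs a where "\<And>i. i \<le> n \<Longrightarrow> xs i \<in> G" and "is_partition n a"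
    and "\<And>i. i \<le> n \<Longrightarrow> agree (a i) w (xs i)"
  using generates[OF assms] unfolding convex_comb_iff_agree by blast

lemma glued_exists:
  assumes "x \<in> W" "y \<in> W"
  shows "\<exists>z. glued c z x y"
proof -
  let ?xs = "\<lambda>i::nat. if i = 0 then x else y"
  have "\<And>i. i \<le> 1 \<Longrightarrow> ?xs i \<in> W" using assms by simp
  then obtain z where "z \<in> W" "\<And>i. i \<le> 1 \<Longrightarrow> agree (if i = 0 then c else - c) z (?xs i)"
    using combination_exists[OF two_block_partition[of c], of ?xs] by blast
  from this(1) this(2)[of 0] this(2)[of 1] assms show ?thesis
    unfolding glued_def by auto
qed

text \<open>The sets \<open>- d w s\<close>, \<open>s \<in> G\<close>, cover the algebra (they contain the blocks of a partition);
  hence elements of the algebra are determined by their parts below these sets.\<close>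
lemma generator_ext:
  assumes "w \<in> W" and eq: "\<And>s. s \<in> G \<Longrightarrow> inf (- d w s) X = inf (- d w s) Y"
  shows "X = Y"
proof -
  obtain n xs a where xs: "\<And>i. i \<le> n \<Longrightarrow> xs i \<in> G" and part: "is_partition n a"
    and agr: "\<And>i. i \<le> n \<Longrightarrow> agree (a i) w (xs i)"
    using generator_decomposition[OF assms(1)] by blast
  show ?thesis
  proof (rule partition_ext[OF part])
    fix i assume i: "i \<le> n"
    have "a i = inf (a i) (- d w (xs i))" using agr[OF i] unfolding agree_iff_le by (simp add: inf.absorb1)
    then show "inf (a i) X = inf (a i) Y" using eq[OF xs[OF i]] by (metis inf.assoc)
  qed
qed

end

section \<open>Local extensions to the generators\<close>

context generated_space
begin

definition local_ext :: "'a set \<Rightarrow> ('a \<Rightarrow> 'a) \<Rightarrow> 'b \<Rightarrow> ('a \<Rightarrow> 'a) \<Rightarrow> ('a \<Rightarrow> 'a) \<Rightarrow> bool" where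
  "local_ext S F c f g \<longleftrightarrow>
     (\<forall>s\<in>G. f s \<in> W \<and> g s \<in> W) \<and>
     (\<forall>s\<in>G. \<forall>s'\<in>G. inf c (d (f s) (f s')) = inf c (d s s') \<and>
                    inf c (d (g s) s') = inf c (d s (f s'))) \<and>
     (\<forall>u\<in>S. \<forall>s\<in>G. inf c (d (F u) (f s)) = inf c (d u s))"

lemma local_extD:
  assumes "local_ext S F c f g"
  shows "s \<in> G \<Longrightarrow> f s \<in> W" and "s \<in> G \<Longrightarrow> g s \<in> W"
    and "s \<in> G \<Longrightarrow> s' \<in> G \<Longrightarrow> inf c (d (f s) (f s')) = inf c (d s s')"
    and "s \<in> G \<Longrightarrow> s' \<in> G \<Longrightarrow> inf c (d (g s) s') = inf c (d s (f s'))"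
    and "u \<in> S \<Longrightarrow> s \<in> G \<Longrightarrow> inf c (d (F u) (f s)) = inf c (d u s)"
  using assms unfolding local_ext_def by blast+

lemma local_ext_sup:
  assumes S: "S \<subseteq> W" "F ` S \<subseteq> W"
    and ext1: "local_ext S F c1 f1 g1" and ext2: "local_ext S F c2 f2 g2"
  shows "\<exists>f g. local_ext S F (sup c1 c2) f g"
proof -
  have "\<forall>s\<in>G. \<exists>z. glued c1 z (f1 s) (f2 s)" "\<forall>s\<in>G. \<exists>z. glued c1 z (g1 s) (g2 s)"
    using glued_exists local_extD(1,2)[OF ext1] local_extD(1,2)[OF ext2] by blast+
  then obtain f g where f: "\<And>s. s \<in> G \<Longrightarrow> glued c1 (f s) (f1 s) (f2 s)"
    and g: "\<And>s. s \<in> G \<Longrightarrow> glued c1 (g s) (g1 s) (g2 s)"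
    by (metis bchoice)
  have gen: "glued c1 s s s" if "s \<in> G" for s using glued_self gen_subset that by blast
  have pt: "glued c1 u u u" "glued c1 (F u) (F u) (F u)" if "u \<in> S" for u
    using glued_self S that by blast+
  have "local_ext S F (sup c1 c2) f g"
    unfolding local_ext_def
  proof (intro conjI ballI)
    fix s assume "s \<in> G"
    then show "f s \<in> W" "g s \<in> W" using f g unfolding glued_def by blast+
  next
    fix s s' assume s: "s \<in> G" and s': "s' \<in> G"
    show "inf (sup c1 c2) (d (f s) (f s')) = inf (sup c1 c2) (d s s')"
      using local_extD(3)[OF ext1 s s'] local_extD(3)[OF ext2 s s']
      by (rule glued_agreement[OF f[OF s] f[OF s'] gen[OF s] gen[OF s']])
    show "inf (sup c1 c2) (d (g s) s') = inf (sup c1 c2) (d s (f s'))"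
      using local_extD(4)[OF ext1 s s'] local_extD(4)[OF ext2 s s']
      by (rule glued_agreement[OF g[OF s] gen[OF s'] gen[OF s] f[OF s']])
  next
    fix u s assume u: "u \<in> S" and s: "s \<in> G"
    show "inf (sup c1 c2) (d (F u) (f s)) = inf (sup c1 c2) (d u s)"
      using local_extD(5)[OF ext1 u s] local_extD(5)[OF ext2 u s]
      by (rule glued_agreement[OF pt(2)[OF u] f[OF s] pt(1)[OF u] gen[OF s]])
  qed
  then show ?thesis by blast
qed

text \<open>If \<open>c\<close> decides all distances among the relevant points (the generators, \<open>S\<close> and
  \<open>F ` S\<close>), agreement on \<open>c\<close> is an equivalence relation whose classes are permuted by a map
  on the generators; this is the discrete case of the extension problem.\<close>
lemma local_ext_decided:
  assumes S: "S \<subseteq> W" "F ` S \<subseteq> W"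
    and iso: "\<And>u u'. u \<in> S \<Longrightarrow> u' \<in> S \<Longrightarrow> d (F u) (F u') = d u u'"
    and decided: "\<And>x y. x \<in> G \<union> S \<union> F ` S \<Longrightarrow> y \<in> G \<union> S \<union> F ` S \<Longrightarrow> c \<le> d x y \<or> c \<le> - d x y"
  shows "\<exists>f g. local_ext S F c f g"
proof (cases "c = bot")
  case True
  then have "local_ext S F c id id" using gen_subset unfolding local_ext_def by auto
  then show ?thesis by blast
next
  case False
  define T where "T = G \<union> S \<union> F ` S"
  define r where "r = {(x, y). x \<in> T \<and> y \<in> T \<and> agree c x y}"
  have T: "G \<subseteq> T" "S \<subseteq> T" "F ` S \<subseteq> T" and TW: "T \<subseteq> W"
    using S gen_subset unfolding T_def by auto
  have eqv: "equiv T r"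
    unfolding r_def equiv_def refl_on_def sym_def trans_def
    using TW agree_refl agree_sym agree_trans by blast
  \<comment> \<open>Otherwise \<open>c\<close> would lie below all \<open>d x s\<close>, \<open>s \<in> G\<close>, and hence be zero.\<close>
  have cover: "\<exists>s\<in>G. (x, s) \<in> r" if x: "x \<in> T" for x
  proof (rule ccontr)
    assume none: "\<not> (\<exists>s\<in>G. (x, s) \<in> r)"
    have c_le: "c \<le> d x s" if s: "s \<in> G" for s
    proof -
      have "\<not> agree c x s" using none s x T unfolding r_def by blast
      then show ?thesis using decided[of x s] x s unfolding T_def agree_iff_le by blast
    qed
    have "c = bot"
    proof (rule generator_ext)
      show "x \<in> W" using x TW by blast
      fix s assume "s \<in> G"
      then have "c \<le> d x s" by (rule c_le)
      then show "inf (- d x s) c = inf (- d x s) bot" by (simp add: inf_commute inf_shunt)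
    qed
    with False show False ..
  qed
  have resp: "(F u, F u') \<in> r \<longleftrightarrow> (u, u') \<in> r" if "u \<in> S" "u' \<in> S" for u u'
    using iso[OF that] that unfolding r_def T_def agree_def by auto
  obtain f g where fg: "\<forall>s\<in>G. f s \<in> G \<and> g s \<in> G"
    and gens: "\<forall>s\<in>G. \<forall>s'\<in>G. ((f s, f s') \<in> r \<longleftrightarrow> (s, s') \<in> r) \<and> ((g s, s') \<in> r \<longleftrightarrow> (s, f s') \<in> r)"
    and compat: "\<forall>u\<in>S. \<forall>s\<in>G. (F u, f s) \<in> r \<longleftrightarrow> (u, s) \<in> r"
    using class_map_on_generators[OF eqv finite_gen T(1) cover T(2,3) resp] by blast
  have dist_eq: "inf c (d x y) = inf c (d p q)"
    if T: "x \<in> T" "y \<in> T" "p \<in> T" "q \<in> T" and iff: "(x, y) \<in> r \<longleftrightarrow> (p, q) \<in> r" for x y p q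
  proof (rule decided_agreement)
    show "c \<le> d x y \<or> c \<le> - d x y" "c \<le> d p q \<or> c \<le> - d p q"
      using decided T unfolding T_def by blast+
    show "inf c (d x y) = bot \<longleftrightarrow> inf c (d p q) = bot"
      using iff T unfolding r_def agree_def by blast
  qed
  have "local_ext S F c f g"
    unfolding local_ext_def
  proof (intro conjI ballI)
    fix s assume "s \<in> G"
    then show "f s \<in> W" "g s \<in> W" using fg gen_subset by auto
  next
    fix s s' assume s: "s \<in> G" and s': "s' \<in> G"
    have inT: "s \<in> T" "s' \<in> T" "f s \<in> T" "f s' \<in> T" "g s \<in> T" using fg T s s' by blast+
    show "inf c (d (f s) (f s')) = inf c (d s s')"
      using gens s s' inT by (intro dist_eq) blast+
    show "inf c (d (g s) s') = inf c (d s (f s'))"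
      using gens s s' inT by (intro dist_eq) blast+
  next
    fix u s assume u: "u \<in> S" and s: "s \<in> G"
    have inT: "u \<in> T" "F u \<in> T" "s \<in> T" "f s \<in> T" using fg T u s by blast+
    show "inf c (d (F u) (f s)) = inf c (d u s)"
      using compat u s inT by (intro dist_eq) blast+
  qed
  then show ?thesis by blast
qed

text \<open>Splitting the algebra along the finitely many relevant distances and gluing the
  discrete solutions yields a local extension over \<open>top\<close>.\<close>
lemma local_ext_top:
  assumes "finite S" "S \<subseteq> W" "F ` S \<subseteq> W"
    and iso: "\<And>u u'. u \<in> S \<Longrightarrow> u' \<in> S \<Longrightarrow> d (F u) (F u') = d u u'"
  shows "\<exists>f g. local_ext S F top f g"
proof -
  let ?T = "G \<union> S \<union> F ` S"
  have "finite ((\<lambda>(x, y). d x y) ` (?T \<times> ?T))" using finite_gen assms(1) by simp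
  then show ?thesis
  proof (rule decided_induct[where \<Phi> = "\<lambda>c. \<exists>f g. local_ext S F c f g"])
    show "\<exists>f g. local_ext S F (sup c1 c2) f g"
      if "\<exists>f g. local_ext S F c1 f g" "\<exists>f g. local_ext S F c2 f g" for c1 c2
      using that local_ext_sup[OF assms(2,3)] by blast
  next
    fix c assume "\<forall>b\<in>(\<lambda>(x, y). d x y) ` (?T \<times> ?T). c \<le> b \<or> c \<le> - b"
    then have dec: "c \<le> d x y \<or> c \<le> - d x y" if "x \<in> ?T" "y \<in> ?T" for x y
      using that by blast
    show "\<exists>f g. local_ext S F c f g"
      using local_ext_decided[OF assms(2,3) iso dec] by blast
  qed
qed

end

section \<open>Extending an isometry of the generators\<close>

locale generator_isometry = generated_space +
  fixes f g :: "'a \<Rightarrow> 'a"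
  assumes f_in: "s \<in> G \<Longrightarrow> f s \<in> W" and g_in: "s \<in> G \<Longrightarrow> g s \<in> W"
    and f_dist: "s \<in> G \<Longrightarrow> s' \<in> G \<Longrightarrow> d (f s) (f s') = d s s'"
    and g_dist: "s \<in> G \<Longrightarrow> s' \<in> G \<Longrightarrow> d (g s) s' = d s (f s')"
begin

definition image_of :: "'a \<Rightarrow> 'a \<Rightarrow> bool" where
  "image_of w z \<longleftrightarrow> z \<in> W \<and> (\<forall>s\<in>G. d z (f s) = d w s)"

lemma image_of_agree: "image_of w z \<Longrightarrow> s \<in> G \<Longrightarrow> agree (- d w s) z (f s)"
  unfolding image_of_def agree_def by simp

text \<open>Two images of \<open>w\<close> agree on every \<open>- d w s\<close>, hence coincide.\<close>
lemma image_of_unique: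
  assumes w: "w \<in> W" and z: "image_of w z" "image_of w z'"
  shows "z = z'"
proof -
  have W: "z \<in> W" "z' \<in> W" using z unfolding image_of_def by auto
  have "d z z' = bot"
  proof (rule generator_ext[OF w])
    fix s assume s: "s \<in> G"
    have "inf (- d w s) (d z z') = inf (- d w s) (d (f s) (f s))"
      by (rule agree_dist[OF W(1) f_in[OF s] W(2) f_in[OF s]
            image_of_agree[OF z(1) s] image_of_agree[OF z(2) s]])
    then show "inf (- d w s) (d z z') = inf (- d w s) bot" using f_in[OF s] by simp
  qed
  then show ?thesis using dist_eq_bot_iff W by blast
qed

text \<open>An image is obtained by replacing the generators in a decomposition of \<open>w\<close> by their
  \<open>f\<close>-images.\<close>
lemma image_of_exists:
  assumes w: "w \<in> W"
  shows "\<exists>z. image_of w z"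
proof -
  obtain n xs a where xs: "\<And>i. i \<le> n \<Longrightarrow> xs i \<in> G" and part: "is_partition n a"
    and agr: "\<And>i. i \<le> n \<Longrightarrow> agree (a i) w (xs i)"
    using generator_decomposition[OF w] by blast
  obtain z where z: "z \<in> W" "\<And>i. i \<le> n \<Longrightarrow> agree (a i) z (f (xs i))"
    using combination_exists[OF part, of "\<lambda>i. f (xs i)"] f_in xs by blast
  have "d z (f s) = d w s" if s: "s \<in> G" for s
    using xs agr z gen_subset f_in f_dist s w
    by (intro dist_eq_by_blocks[OF part, where xs = "\<lambda>i. f (xs i)" and ys = xs]) auto
  then show ?thesis using z(1) unfolding image_of_def by blast
qed

definition ext :: "'a \<Rightarrow> 'a" where
  "ext w = (THE z. image_of w z)"

lemma ext_eqI: "w \<in> W \<Longrightarrow> image_of w z \<Longrightarrow> ext w = z"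
  unfolding ext_def using image_of_unique by blast

lemma ext_image_of: "w \<in> W \<Longrightarrow> image_of w (ext w)"
  using image_of_exists ext_eqI by blast

lemma ext_in: "w \<in> W \<Longrightarrow> ext w \<in> W"
  using ext_image_of unfolding image_of_def by blast

text \<open>Distances are checked locally, on the sets where \<open>w\<close> and \<open>w'\<close> agree with generators.\<close>
lemma ext_dist:
  assumes w: "w \<in> W" "w' \<in> W"
  shows "d (ext w) (ext w') = d w w'"
proof (rule generator_ext[OF w(1)])
  fix s assume s: "s \<in> G"
  show "inf (- d w s) (d (ext w) (ext w')) = inf (- d w s) (d w w')"
  proof (rule generator_ext[OF w(2)])
    fix s' assume s': "s' \<in> G"
    let ?e = "inf (- d w s) (- d w' s')"
    have agree_ext: "agree ?e (ext w) (f s)" "agree ?e (ext w') (f s')"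
      using agree_mono[OF inf_le1 image_of_agree[OF ext_image_of[OF w(1)] s]]
        agree_mono[OF inf_le2 image_of_agree[OF ext_image_of[OF w(2)] s']] .
    have agree_w: "agree ?e w s" "agree ?e w' s'"
      using agree_mono[OF inf_le1 agree_off_dist] agree_mono[OF inf_le2 agree_off_dist] .
    have W: "ext w \<in> W" "ext w' \<in> W" "s \<in> W" "s' \<in> W"
      using ext_in w s s' gen_subset by auto
    have "inf ?e (d (ext w) (ext w')) = inf ?e (d (f s) (f s'))"
      using W f_in s s' agree_ext by (intro agree_dist) auto
    also have "\<dots> = inf ?e (d w w')"
      using f_dist[OF s s'] W w agree_w by (simp add: agree_dist)
    finally show "inf (- d w' s') (inf (- d w s) (d (ext w) (ext w'))) =
        inf (- d w' s') (inf (- d w s) (d w w'))"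
      by (simp add: ac_simps)
  qed
qed

text \<open>Surjectivity: replacing the generators in a decomposition of \<open>z\<close> by their \<open>g\<close>-images
  gives a preimage of \<open>z\<close>.\<close>
lemma ext_surj:
  assumes z: "z \<in> W"
  shows "\<exists>y\<in>W. ext y = z"
proof -
  obtain n xs a where xs: "\<And>i. i \<le> n \<Longrightarrow> xs i \<in> G" and part: "is_partition n a"
    and agr: "\<And>i. i \<le> n \<Longrightarrow> agree (a i) z (xs i)"
    using generator_decomposition[OF z] by blast
  obtain y where y: "y \<in> W" "\<And>i. i \<le> n \<Longrightarrow> agree (a i) y (g (xs i))"
    using combination_exists[OF part, of "\<lambda>i. g (xs i)"] g_in xs by blast
  have "d z (f s) = d y s" if s: "s \<in> G" for s
    using xs agr y gen_subset f_in g_in g_dist s z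
    by (intro dist_eq_by_blocks[OF part, where xs = xs and ys = "\<lambda>i. g (xs i)"]) auto
  then have "image_of y z" using z unfolding image_of_def by blast
  then show ?thesis using ext_eqI y(1) by blast
qed

lemma ext_isometry: "bool_isometry W W d ext"
proof -
  have "inj_on ext W"
  proof (rule inj_onI)
    fix w w' assume w: "w \<in> W" "w' \<in> W" and "ext w = ext w'"
    then have "d w w' = bot" using ext_dist[OF w] ext_in by simp
    then show "w = w'" using dist_eq_bot_iff w by blast
  qed
  moreover have "ext ` W = W" using ext_in ext_surj by blast
  ultimately show ?thesis unfolding bool_isometry_def bij_betw_def using ext_dist by blast
qed

lemma ext_extends:
  assumes U: "U \<subseteq> W" "F ` U \<subseteq> W"
    and iso: "\<And>u u'. u \<in> U \<Longrightarrow> u' \<in> U \<Longrightarrow> d (F u) (F u') = d u u'"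
    and SU: "SU \<subseteq> U"
    and genU: "\<exists>n xs a. (\<forall>i\<le>n. xs i \<in> SU) \<and> is_partition n a \<and> convex_comb d u n xs a"
    and compat: "\<And>v s. v \<in> SU \<Longrightarrow> s \<in> G \<Longrightarrow> d (F v) (f s) = d v s"
    and u: "u \<in> U"
  shows "ext u = F u"
proof -
  obtain n xs a where xs: "\<And>i. i \<le> n \<Longrightarrow> xs i \<in> SU" and part: "is_partition n a"
    and agr: "\<And>i. i \<le> n \<Longrightarrow> agree (a i) u (xs i)"
    using genU unfolding convex_comb_iff_agree by blast
  have xsU: "xs i \<in> U" if "i \<le> n" for i using xs[OF that] SU by blast
  have xsW: "xs i \<in> W" "F (xs i) \<in> W" if "i \<le> n" for i using xsU[OF that] U by blast+
  have agrF: "agree (a i) (F u) (F (xs i))" if "i \<le> n" for i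
    using agr[OF that] iso[OF u xsU[OF that]] unfolding agree_def by simp
  have "d (F u) (f s) = d u s" if s: "s \<in> G" for s
    using xs agr agrF xsW U u gen_subset f_in compat s
    by (intro dist_eq_by_blocks[OF part, where xs = "\<lambda>i. F (xs i)" and ys = xs]) auto
  then have "image_of u (F u)" using U u unfolding image_of_def by blast
  then show ?thesis using ext_eqI U u by blast
qed

end

text \<open>An isometric map from a finitely generated subspace \<open>U\<close> of a CFG-space into it extends to
  an isometry of the whole space.\<close>
lemma (in generated_space) isometry_extension:
  assumes U: "U \<subseteq> W" "F ` U \<subseteq> W"
    and iso: "\<And>u u'. u \<in> U \<Longrightarrow> u' \<in> U \<Longrightarrow> d (F u) (F u') = d u u'"
    and SU: "finite SU" "SU \<subseteq> U"
    and genU: "\<And>u. u \<in> U \<Longrightarrow> \<exists>n xs a. (\<forall>i\<le>n. xs i \<in> SU) \<and> is_partition n a \<and> convex_comb d u n xs a"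
  shows "\<exists>F'. bool_isometry W W d F' \<and> (\<forall>x\<in>U. F' x = F x)"
proof -
  obtain f g where loc: "local_ext SU F top f g"
    using local_ext_top[OF SU(1)] SU(2) U iso by blast
  have "generator_isometry W d G f g"
  proof (unfold_locales)
    fix s s' assume s: "s \<in> G" and s': "s' \<in> G"
    show "f s \<in> W" "g s \<in> W" using local_extD(1,2)[OF loc s] .
    show "d (f s) (f s') = d s s'" "d (g s) s' = d s (f s')"
      using local_extD(3,4)[OF loc s s'] by simp_all
  qed
  then interpret generator_isometry W d G f g .
  have "\<forall>u\<in>U. ext u = F u"
    using ext_extends[OF U iso SU(2) genU] local_extD(5)[OF loc] by simp
  then show ?thesis using ext_isometry by blast
qed

theorem theorem2:
  fixes U V W :: "'a set" and d :: "'a \<Rightarrow> 'a \<Rightarrow> 'b::boolean_algebra" and F :: "'a \<Rightarrow> 'a"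
  assumes "CFG_space W d" and "CFG_space U d" and "CFG_space V d"
    and "U \<subseteq> W" and "V \<subseteq> W"
    and "bool_isometry U V d F"
  shows "\<exists>F'. bool_isometry W W d F' \<and> (\<forall>x\<in>U. F' x = F x)"
proof -
  obtain G where G: "finite G" "G \<subseteq> W"
    "\<forall>x\<in>W. \<exists>n xs a. (\<forall>i\<le>n. xs i \<in> G) \<and> is_partition n a \<and> convex_comb d x n xs a"
    using assms(1) unfolding CFG_space_def fin_generated_def by blast
  obtain SU where SU: "finite SU" "SU \<subseteq> U"
    "\<forall>x\<in>U. \<exists>n xs a. (\<forall>i\<le>n. xs i \<in> SU) \<and> is_partition n a \<and> convex_comb d x n xs a"
    using assms(2) unfolding CFG_space_def fin_generated_def by blast
  interpret generated_space W d G
    using assms(1) G unfolding CFG_space_def by unfold_locales blast+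
  have FU: "F ` U \<subseteq> W" and iso: "\<And>u u'. u \<in> U \<Longrightarrow> u' \<in> U \<Longrightarrow> d (F u) (F u') = d u u'"
    using assms(5,6) unfolding bool_isometry_def bij_betw_def by auto
  have genU: "\<And>u. u \<in> U \<Longrightarrow> \<exists>n xs a. (\<forall>i\<le>n. xs i \<in> SU) \<and> is_partition n a \<and> convex_comb d u n xs a"
    using SU(3) by blast
  show ?thesis by (rule isometry_extension[OF assms(4) FU iso SU(1,2) genU])
qed

end
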